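(* Let $\mathcal H$ be a separable complex Hilbert space and $S_2$ the Hilbert space of Hilbert–Schmidt operators on $\mathcal H$ with $\langle\eta,\tau\rangle_2=\operatorname{tr}(\eta^*\tau)$. Let $A\in\mathcal B(S_2)$ be given by $A\eta=a_1\eta b_1+a_2\eta b_2$ with $a_1,a_2,b_1,b_2\in\mathcal B(\mathcal H)$. If $A$ is positive definite, then there exist non-negative $\hat a_1,\hat a_2\in\mathcal B(\mathcal H)$ with $\ker\hat a_1\cap\ker\hat a_2=\{0\}$ and positive definite $\hat b_1,\hat b_2\in\mathcal B(\mathcal H)$ such that $A\eta=\hat a_1\eta\hat b_1+\hat a_2\eta\hat b_2$ for all $\eta\in S_2$.
   Context: For a bounded operator $T$ on a Hilbert space: $T\ge0$ if $\langle x,Tx\rangle\ge0$ for all $x$; positive definite if $\inf\{\langle x,Tx\rangle:\|x\|=1\}>0$. Inner products are anti-linear in the left argument. *)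

theory Defs
  imports "HOL-Analysis.Analysis"
begin

class complex_vector = real_vector +
  fixes scaleC :: "complex \<Rightarrow> 'a \<Rightarrow> 'a"  (infixr \<open>*\<^sub>C\<close> 75)
  assumes scaleC_add_right: "a *\<^sub>C (x + y) = a *\<^sub>C x + a *\<^sub>C y"
    and scaleC_add_left: "(a + b) *\<^sub>C x = a *\<^sub>C x + b *\<^sub>C x"
    and scaleC_scaleC: "a *\<^sub>C (b *\<^sub>C x) = (a * b) *\<^sub>C x"
    and scaleC_one: "1 *\<^sub>C x = x"
    and scaleR_scaleC: "scaleR r x = complex_of_real r *\<^sub>C x"

text \<open>Complex inner product spaces; the inner product is anti-linear in the left argument,
  and the norm is the one induced by the inner product.\<close>
class complex_inner = complex_vector + real_normed_vector +
  fixes cinner :: "'a \<Rightarrow> 'a \<Rightarrow> complex"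
  assumes cinner_commute: "cinner x y = cnj (cinner y x)"
    and cinner_add_right: "cinner x (y + z) = cinner x y + cinner x z"
    and cinner_scaleC_right: "cinner x (a *\<^sub>C y) = a * cinner x y"
    and cinner_ge_zero: "Im (cinner x x) = 0 \<and> Re (cinner x x) \<ge> 0"
    and cinner_eq_zero_iff: "cinner x x = 0 \<longleftrightarrow> x = 0"
    and norm_eq_sqrt_cinner: "norm x = sqrt (Re (cinner x x))"

text \<open>A (complex) Hilbert space is a complete complex inner product space; we use the
  sort "{complex_inner, complete_space}".\<close>

definition bounded_clinear :: "('a::{complex_vector, real_normed_vector} \<Rightarrow> 'b::{complex_vector, real_normed_vector}) \<Rightarrow> bool" where
  "bounded_clinear T \<longleftrightarrow>
     (\<forall>x y. T (x + y) = T x + T y) \<and> (\<forall>c x. T (c *\<^sub>C x) = c *\<^sub>C T x) \<and>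
     (\<exists>K. \<forall>x. norm (T x) \<le> norm x * K)"

text \<open>Non-negativity and positive definiteness of an operator T on a subspace
  V w.r.t. a sesquilinear form ip:
  "T \<ge> 0" iff "\<langle>x,Tx\<rangle> \<ge> 0" for all x;
  positive definite iff "inf {\<langle>x,Tx\<rangle> : \<parallel>x\<parallel> = 1} > 0",
  i.e. there is "c > 0" with "\<langle>x,Tx\<rangle> \<ge> c \<parallel>x\<parallel>^2".\<close>
definition nonneg_wrt :: "('v \<Rightarrow> 'v \<Rightarrow> complex) \<Rightarrow> 'v set \<Rightarrow> ('v \<Rightarrow> 'v) \<Rightarrow> bool" where
  "nonneg_wrt ip V T \<longleftrightarrow> (\<forall>x\<in>V. Im (ip x (T x)) = 0 \<and> Re (ip x (T x)) \<ge> 0)"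

definition posdef_wrt :: "('v \<Rightarrow> 'v \<Rightarrow> complex) \<Rightarrow> 'v set \<Rightarrow> ('v \<Rightarrow> 'v) \<Rightarrow> bool" where
  "posdef_wrt ip V T \<longleftrightarrow>
     (\<exists>c>0. \<forall>x\<in>V. Im (ip x (T x)) = 0 \<and> Re (ip x (T x)) \<ge> c * Re (ip x x))"

definition orthonormal_basis :: "'a::complex_inner set \<Rightarrow> bool" where
  "orthonormal_basis B \<longleftrightarrow>
     (\<forall>e\<in>B. cinner e e = 1) \<and> (\<forall>e\<in>B. \<forall>f\<in>B. e \<noteq> f \<longrightarrow> cinner e f = 0) \<and>
     (\<forall>x. (\<forall>e\<in>B. cinner e x = 0) \<longrightarrow> x = 0)"

definition hilbert_schmidt :: "'a::complex_inner set \<Rightarrow> ('a \<Rightarrow> 'a) \<Rightarrow> bool" where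
  "hilbert_schmidt B \<eta> \<longleftrightarrow> bounded_clinear \<eta> \<and> ((\<lambda>e. (norm (\<eta> e))\<^sup>2) summable_on B)"

text \<open>"\<langle>\<eta>,\<tau>\<rangle>_2 = tr(\<eta>^*\<tau>) = \<Sum>_e \<langle>e, \<eta>^*\<tau> e\<rangle> = \<Sum>_e \<langle>\<eta> e, \<tau> e\<rangle>".\<close>
definition hs_inner :: "'a::complex_inner set \<Rightarrow> ('a \<Rightarrow> 'a) \<Rightarrow> ('a \<Rightarrow> 'a) \<Rightarrow> complex" where
  "hs_inner B \<eta> \<tau> = (\<Sum>\<^sub>\<infinity>e\<in>B. cinner (\<eta> e) (\<tau> e))"

end

theory Submission
  imports Defs
begin

text \<open>
  Pairing A with the rank-one operators z \<mapsto> <y, z> x in the Hilbert--Schmidt inner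
  product gives the elementary form E(x, y) = <x, a1 x> <y, b1 y> + <x, a2 x> <y, b2 y>, so
  positive definiteness of A makes E real with E(x, y) \<ge> c |x|^2 |y|^2.

  Replacing (a1, a2) by M (a1, a2) and (b1, b2) by the inverse transpose of M applied to
  (b1, b2), for an invertible 2 \<times> 2 matrix M, changes neither A nor E. With first row
  (<y1, b1 y1>, <y1, b2 y1>) for a unit vector y1, the new first coefficient A1 satisfies
  <x, A1 x> = E(x, y1) and is positive definite; a second row (<y2, b1 y2>, <y2, b2 y2>) makes
  <x, A2 x> = E(x, y2) real, and if no such row is independent of the first, the new B2 vanishes.

  Writing <x, A2 x> = t(x) <x, A1 x>, the form factors as E(x, y) = <x, A1 x> (<y, B1 y> +
  t(x) <y, B2 y>), so B1 + s B2 is positive definite for every s between smin = inf t and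
  smax = sup t. If t is constant then A2 = t A1 and A is the single term A1 \<eta> (B1 + t B2).
  Otherwise A \<eta> = C1 \<eta> (B1 + smin B2) + C2 \<eta> (B1 + smax B2) with the nonnegative operators
  C1 = (smax A1 - A2) / (smax - smin) and C2 = (A2 - smin A1) / (smax - smin), whose sum A1
  has trivial kernel.
\<close>

section \<open>Complex inner product spaces\<close>

global_interpretation cvec: module "scaleC :: complex \<Rightarrow> 'a \<Rightarrow> 'a::complex_vector"
  by standard (simp_all add: scaleC_add_right scaleC_add_left scaleC_scaleC scaleC_one)

lemma cinner_add_left: "cinner (x + y) z = cinner x z + cinner y (z::'a::complex_inner)"
  by (metis cinner_commute cinner_add_right complex_cnj_add)

lemma cinner_scaleC_left: "cinner (a *\<^sub>C x) y = cnj a * cinner x (y::'a::complex_inner)"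
  by (metis cinner_commute cinner_scaleC_right complex_cnj_mult)

global_interpretation cinner_right: additive "cinner x" for x :: "'a::complex_inner"
  by standard (rule cinner_add_right)

global_interpretation cinner_left: additive "\<lambda>x. cinner x y" for y :: "'a::complex_inner"
  by standard (rule cinner_add_left)

declare cinner_right.zero [simp] cinner_left.zero [simp]

lemma cinner_self: "cinner x x = of_real ((norm (x::'a::complex_inner))\<^sup>2)"
  using cinner_ge_zero[of x] norm_eq_sqrt_cinner[of x] by (simp add: complex_eq_iff)

lemma cnj_mult_self: "cnj z * z = complex_of_real ((cmod z)\<^sup>2)"
  by (simp add: mult.commute flip: complex_norm_square)

lemma norm_scaleC: "norm (c *\<^sub>C x) = cmod c * norm (x::'a::complex_inner)"
proof -
  have "complex_of_real ((norm (c *\<^sub>C x))\<^sup>2) = cnj c * c * cinner x x"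
    by (subst cinner_self[symmetric]) (simp add: cinner_scaleC_left cinner_scaleC_right)
  also have "\<dots> = complex_of_real ((cmod c * norm x)\<^sup>2)"
    by (simp add: cinner_self cnj_mult_self power_mult_distrib)
  finally show ?thesis
    by (simp only: of_real_eq_iff) simp
qed

lemma cinner_Cauchy_Schwarz: "cmod (cinner x y) \<le> norm x * norm (y::'a::complex_inner)"
proof (cases "y = 0")
  case True
  then show ?thesis by simp
next
  case False
  define r where "r = (norm y)\<^sup>2"
  define w where "w = cinner y x"
  have r: "r > 0" using False by (simp add: r_def)
  have "0 \<le> Re (cinner (x - (w / r) *\<^sub>C y) (x - (w / r) *\<^sub>C y))"
    using cinner_ge_zero by blast
  also have "\<dots> = (norm x)\<^sup>2 - (cmod w)\<^sup>2 / r"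
    using r by (simp add: cinner_left.diff cinner_right.diff cinner_scaleC_left cinner_scaleC_right
        cinner_self[of x] cinner_self[of y] w_def[symmetric] cinner_commute[of x y] flip: r_def)
       (simp add: field_simps power2_eq_square cmod_power2[of w, unfolded power2_eq_square])
  finally have "(cmod w)\<^sup>2 \<le> (norm x * norm y)\<^sup>2"
    using r by (simp add: field_simps r_def)
  then show ?thesis
    by (simp add: w_def cinner_commute[of x y] power2_le_iff_abs_le)
qed

section \<open>Bounded operators and their quadratic forms\<close>

lemma bounded_clinear_additive: "bounded_clinear T \<Longrightarrow> Modules.additive T"
  unfolding bounded_clinear_def Modules.additive_def by blast

lemma bounded_clinear_scaleC: "bounded_clinear T \<Longrightarrow> T (c *\<^sub>C x) = c *\<^sub>C T x"
  unfolding bounded_clinear_def by blast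

lemmas bounded_clinear_add_apply = additive.add[OF bounded_clinear_additive]
lemmas bounded_clinear_zero_apply = additive.zero[OF bounded_clinear_additive]

lemma bounded_clinear_pos_bound:
  assumes "bounded_clinear T"
  obtains K where "\<And>x. norm (T x) \<le> norm x * K" "K > 0"
proof -
  obtain K where K: "\<And>x. norm (T x) \<le> norm x * K"
    using assms unfolding bounded_clinear_def by blast
  have "norm (T x) \<le> norm x * max K 1" for x
    by (rule order.trans[OF K]) (simp add: mult_left_mono)
  then show thesis by (rule that) simp
qed

lemma bounded_clinear_id: "bounded_clinear (\<lambda>x. x)"
  unfolding bounded_clinear_def by (auto intro: exI[of _ 1])

lemma bounded_clinear_const_zero: "bounded_clinear (\<lambda>x. 0)"
  unfolding bounded_clinear_def by (auto intro: exI[of _ 0])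

lemma bounded_clinear_compose:
  fixes S :: "'b::complex_inner \<Rightarrow> 'c::complex_inner" and T :: "'a::complex_inner \<Rightarrow> 'b"
  assumes S: "bounded_clinear S" and T: "bounded_clinear T"
  shows "bounded_clinear (\<lambda>x. S (T x))"
proof -
  obtain K where K: "\<And>x. norm (S x) \<le> norm x * K" "K > 0" using bounded_clinear_pos_bound[OF S] by blast
  obtain L where L: "\<And>x. norm (T x) \<le> norm x * L" "L > 0" using bounded_clinear_pos_bound[OF T] by blast
  have "norm (S (T x)) \<le> norm x * (L * K)" for x
    using order.trans[OF K(1) mult_right_mono[OF L(1) K(2)[THEN less_imp_le]]] by (simp add: mult.assoc)
  then show ?thesis
    using S T unfolding bounded_clinear_def by auto
qed

lemma bounded_clinear_add:
  fixes S T :: "'a::complex_inner \<Rightarrow> 'b::complex_inner"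
  assumes S: "bounded_clinear S" and T: "bounded_clinear T"
  shows "bounded_clinear (\<lambda>x. S x + T x)"
proof -
  obtain K where K: "\<And>x. norm (S x) \<le> norm x * K" "K > 0" using bounded_clinear_pos_bound[OF S] by blast
  obtain L where L: "\<And>x. norm (T x) \<le> norm x * L" "L > 0" using bounded_clinear_pos_bound[OF T] by blast
  have "norm (S x + T x) \<le> norm x * (K + L)" for x
    using norm_triangle_le[OF add_mono[OF K(1) L(1)]] by (simp add: distrib_left)
  then show ?thesis
    using S T unfolding bounded_clinear_def by (auto simp: cvec.scale_right_distrib add_ac)
qed

lemma bounded_clinear_scaleC_left:
  fixes T :: "'a::complex_inner \<Rightarrow> 'b::complex_inner"
  assumes T: "bounded_clinear T"
  shows "bounded_clinear (\<lambda>x. c *\<^sub>C T x)"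
proof -
  obtain L where L: "\<And>x. norm (T x) \<le> norm x * L" "L > 0" using bounded_clinear_pos_bound[OF T] by blast
  have "norm (c *\<^sub>C T x) \<le> norm x * (cmod c * L)" for x
    using mult_left_mono[OF L(1)[of x], of "cmod c"] by (simp add: norm_scaleC algebra_simps)
  then show ?thesis
    using T unfolding bounded_clinear_def
    by (auto simp: cvec.scale_right_distrib mult.commute[of c])
qed

lemma bounded_linear_cinner_compose:
  assumes T: "bounded_clinear T"
  shows "bounded_linear (\<lambda>z. cinner w (T z))"
proof -
  obtain K where K: "\<And>x. norm (T x) \<le> norm x * K" "K > 0" using bounded_clinear_pos_bound[OF T] by blast
  have "norm (cinner w (T z)) \<le> norm z * (norm w * K)" for z
    using order.trans[OF cinner_Cauchy_Schwarz mult_left_mono[OF K(1)]] by (simp add: algebra_simps)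
  moreover have "T (x + y) = T x + T y" "T (r *\<^sub>R x) = r *\<^sub>R T x" for x y r
    using T unfolding bounded_clinear_def by (auto simp: scaleR_scaleC)
  ultimately show ?thesis
    by (intro bounded_linear_intro[where K="norm w * K"])
       (auto simp: cinner_add_right scaleR_scaleC cinner_scaleC_right scaleR_conv_of_real)
qed

definition lincomb :: "complex \<Rightarrow> ('a \<Rightarrow> 'b::complex_vector) \<Rightarrow> complex \<Rightarrow> ('a \<Rightarrow> 'b) \<Rightarrow> 'a \<Rightarrow> 'b" where
  "lincomb p S q T = (\<lambda>x. p *\<^sub>C S x + q *\<^sub>C T x)"

lemma bounded_clinear_lincomb:
  fixes S T :: "'a::complex_inner \<Rightarrow> 'b::complex_inner"
  shows "bounded_clinear S \<Longrightarrow> bounded_clinear T \<Longrightarrow> bounded_clinear (lincomb p S q T)"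
  unfolding lincomb_def by (intro bounded_clinear_add bounded_clinear_scaleC_left)

definition qform :: "('a::complex_inner \<Rightarrow> 'a) \<Rightarrow> 'a \<Rightarrow> complex" where
  "qform T x = cinner x (T x)"

lemma qform_lincomb: "qform (lincomb p S q T) x = p * qform S x + q * qform T x"
  by (simp add: qform_def lincomb_def cinner_add_right cinner_scaleC_right)

lemma qform_bound:
  assumes "bounded_clinear T"
  obtains K where "K > 0" "\<And>x. cmod (qform T x) \<le> K * (norm x)\<^sup>2"
proof -
  obtain K where K: "\<And>x. norm (T x) \<le> norm x * K" "K > 0"
    using bounded_clinear_pos_bound[OF assms] by blast
  have "cmod (qform T x) \<le> K * (norm x)\<^sup>2" for x
    using order.trans[OF cinner_Cauchy_Schwarz mult_left_mono[OF K(1)]]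
    by (simp add: qform_def power2_eq_square algebra_simps)
  with K(2) show thesis by (rule that)
qed

lemma bounded_clinear_eq_zero_if_qform_zero:
  assumes T: "bounded_clinear T" and zero: "\<And>x. qform T x = 0"
  shows "T x = 0"
proof -
  have sym: "cinner u (T v) + cinner v (T u) = 0" for u v
    using zero[of "u + v"] zero[of u] zero[of v] T
    by (simp add: qform_def bounded_clinear_def cinner_add_left cinner_add_right)
  have antisym: "cinner u (T v) - cinner v (T u) = 0" for u v
    using sym[of u "\<i> *\<^sub>C v"] T
    by (simp add: bounded_clinear_scaleC cinner_scaleC_left cinner_scaleC_right algebra_simps)
  have "cinner (T x) (T x) = 0"
    using sym[of "T x" x] antisym[of "T x" x] by simp
  then show ?thesis by (simp add: cinner_eq_zero_iff)
qed

lemma nonneg_wrt_cinner_iff: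
  "nonneg_wrt cinner UNIV T \<longleftrightarrow> (\<forall>x. Im (qform T x) = 0 \<and> 0 \<le> Re (qform T x))"
  by (simp add: nonneg_wrt_def qform_def)

lemma posdef_wrt_cinner_iff:
  "posdef_wrt cinner UNIV T \<longleftrightarrow> (\<exists>c>0. \<forall>x. Im (qform T x) = 0 \<and> c * (norm x)\<^sup>2 \<le> Re (qform T x))"
  by (simp add: posdef_wrt_def qform_def cinner_self)

lemma nonneg_if_posdef: "posdef_wrt cinner UNIV T \<Longrightarrow> nonneg_wrt cinner UNIV T"
  unfolding posdef_wrt_cinner_iff nonneg_wrt_cinner_iff
  by (meson order.trans mult_nonneg_nonneg less_imp_le zero_le_power2)

lemma kernels_trivial_if_sum_posdef:
  assumes "bounded_clinear a1" "bounded_clinear a2" "posdef_wrt cinner UNIV (\<lambda>x. a1 x + a2 x)"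
  shows "{x. a1 x = 0} \<inter> {x. a2 x = 0} = {0}"
proof -
  obtain c where "c > 0" and c: "\<And>x. c * (norm x)\<^sup>2 \<le> Re (qform (\<lambda>x. a1 x + a2 x) x)"
    using assms(3) unfolding posdef_wrt_cinner_iff by blast
  have "x = 0" if "a1 x = 0" "a2 x = 0" for x
    using c[of x] that \<open>c > 0\<close> by (simp add: qform_def mult_le_0_iff)
  then show ?thesis
    using assms(1,2) by (auto simp: bounded_clinear_zero_apply)
qed

section \<open>Rank-one and elementary operators\<close>

definition rank_one :: "'a::complex_inner \<Rightarrow> 'a \<Rightarrow> 'a \<Rightarrow> 'a" where
  "rank_one x y = (\<lambda>z. cinner y z *\<^sub>C x)"

lemma bounded_clinear_rank_one: "bounded_clinear (rank_one x y)"
proof -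
  have "norm (rank_one x y z) \<le> norm z * (norm y * norm x)" for z
    using mult_right_mono[OF cinner_Cauchy_Schwarz[of y z], of "norm x"]
    by (simp add: rank_one_def norm_scaleC algebra_simps)
  then show ?thesis
    unfolding bounded_clinear_def
    by (auto simp: rank_one_def cinner_add_right cvec.scale_left_distrib cinner_scaleC_right)
qed

definition elementary_operator ::
  "('a \<Rightarrow> 'a) \<Rightarrow> ('a \<Rightarrow> 'a) \<Rightarrow> ('a \<Rightarrow> 'a) \<Rightarrow> ('a \<Rightarrow> 'a) \<Rightarrow> ('a \<Rightarrow> 'a::plus) \<Rightarrow> 'a \<Rightarrow> 'a" where
  "elementary_operator a1 b1 a2 b2 \<eta> = (\<lambda>x. a1 (\<eta> (b1 x)) + a2 (\<eta> (b2 x)))"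

definition elementary_form ::
  "('a::complex_inner \<Rightarrow> 'a) \<Rightarrow> ('a \<Rightarrow> 'a) \<Rightarrow> ('a \<Rightarrow> 'a) \<Rightarrow> ('a \<Rightarrow> 'a) \<Rightarrow> 'a \<Rightarrow> 'a \<Rightarrow> complex" where
  "elementary_form a1 b1 a2 b2 x y = qform a1 x * qform b1 y + qform a2 x * qform b2 y"

lemma bounded_clinear_elementary_operator:
  fixes a1 b1 a2 b2 \<eta> :: "'a::complex_inner \<Rightarrow> 'a"
  assumes "bounded_clinear a1" "bounded_clinear b1" "bounded_clinear a2" "bounded_clinear b2"
    and "bounded_clinear \<eta>"
  shows "bounded_clinear (elementary_operator a1 b1 a2 b2 \<eta>)"
  unfolding elementary_operator_def
  using bounded_clinear_compose[OF assms(1) bounded_clinear_compose[OF assms(5,2)]]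
    bounded_clinear_compose[OF assms(3) bounded_clinear_compose[OF assms(5,4)]]
  by (rule bounded_clinear_add)

lemma elementary_operator_change_coeffs:
  fixes a1 a2 b1 b2 \<eta> :: "'a::complex_inner \<Rightarrow> 'a"
  assumes ops: "bounded_clinear a1" "bounded_clinear a2" "bounded_clinear \<eta>"
    and inverse: "p1 * r11 + p2 * r21 = 1" "p1 * r12 + p2 * r22 = 0"
      "q1 * r11 + q2 * r21 = 0" "q1 * r12 + q2 * r22 = 1"
  shows "elementary_operator (lincomb p1 a1 q1 a2) (lincomb r11 b1 r12 b2)
      (lincomb p2 a1 q2 a2) (lincomb r21 b1 r22 b2) \<eta> = elementary_operator a1 b1 a2 b2 \<eta>"
    (is "?lhs = ?rhs")
proof
  fix x
  let ?u = "\<eta> (b1 x)" and ?w = "\<eta> (b2 x)"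
  have "?lhs x =
      (p1 * r11 + p2 * r21) *\<^sub>C a1 ?u + (p1 * r12 + p2 * r22) *\<^sub>C a1 ?w +
      (q1 * r11 + q2 * r21) *\<^sub>C a2 ?u + (q1 * r12 + q2 * r22) *\<^sub>C a2 ?w"
    using ops by (simp add: elementary_operator_def lincomb_def bounded_clinear_add_apply
        bounded_clinear_scaleC algebra_simps)
  then show "?lhs x = ?rhs x"
    by (simp add: inverse elementary_operator_def)
qed

lemma elementary_form_change_coeffs:
  assumes inverse: "p1 * r11 + p2 * r21 = 1" "p1 * r12 + p2 * r22 = 0"
      "q1 * r11 + q2 * r21 = 0" "q1 * r12 + q2 * r22 = 1"
  shows "elementary_form (lincomb p1 a1 q1 a2) (lincomb r11 b1 r12 b2)
      (lincomb p2 a1 q2 a2) (lincomb r21 b1 r22 b2) x y = elementary_form a1 b1 a2 b2 x y"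
proof -
  have "elementary_form (lincomb p1 a1 q1 a2) (lincomb r11 b1 r12 b2)
      (lincomb p2 a1 q2 a2) (lincomb r21 b1 r22 b2) x y =
      qform a1 x * qform b1 y * (p1 * r11 + p2 * r21) + qform a1 x * qform b2 y * (p1 * r12 + p2 * r22) +
      qform a2 x * qform b1 y * (q1 * r11 + q2 * r21) + qform a2 x * qform b2 y * (q1 * r12 + q2 * r22)"
    by (simp add: elementary_form_def qform_lincomb algebra_simps)
  then show ?thesis
    by (simp add: inverse elementary_form_def)
qed

lemma complementary_coeffs:
  fixes p q :: complex and f g :: "'b \<Rightarrow> complex"
  assumes "p \<noteq> 0 \<or> q \<noteq> 0"
  obtains p' q' where "p * q' - p' * q \<noteq> 0" "(\<exists>y. p' = f y \<and> q' = g y) \<or> (\<forall>y. p * g y = q * f y)"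
proof (cases "\<forall>y. p * g y = q * f y")
  case True
  have "p * cnj p + cnj q * q = complex_of_real ((cmod p)\<^sup>2 + (cmod q)\<^sup>2)"
    by (simp add: cnj_mult_self mult.commute[of p])
  moreover have "(cmod p)\<^sup>2 + (cmod q)\<^sup>2 > 0"
    using assms by (auto simp: add_pos_nonneg add_nonneg_pos)
  ultimately have "p * cnj p - (- cnj q) * q \<noteq> 0"
    by (metis diff_minus_eq_add minus_mult_left of_real_eq_0_iff less_irrefl)
  with True show thesis by (blast intro: that)
next
  case False
  then obtain y where "p * g y - f y * q \<noteq> 0" by (auto simp: mult.commute)
  then show thesis by (intro that) auto
qed

lemma elementary_change_coeffs_invertible:
  fixes a1 b1 a2 b2 :: "'a::complex_inner \<Rightarrow> 'a"
  assumes ops: "bounded_clinear a1" "bounded_clinear b1" "bounded_clinear a2" "bounded_clinear b2"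
    and "p1 * q2 - p2 * q1 \<noteq> 0"
  obtains B1 B2 where "bounded_clinear B1" "bounded_clinear B2"
    "\<And>\<eta>. bounded_clinear \<eta> \<Longrightarrow> elementary_operator (lincomb p1 a1 q1 a2) B1 (lincomb p2 a1 q2 a2) B2 \<eta> =
      elementary_operator a1 b1 a2 b2 \<eta>"
    "\<And>x y. elementary_form (lincomb p1 a1 q1 a2) B1 (lincomb p2 a1 q2 a2) B2 x y =
      elementary_form a1 b1 a2 b2 x y"
    "\<And>y. qform B2 y = (p1 * qform b2 y - q1 * qform b1 y) / (p1 * q2 - p2 * q1)"
proof -
  define d where "d = p1 * q2 - p2 * q1"
  have "d \<noteq> 0"
    using assms(5) by (simp add: d_def)
  have inverse: "p1 * (q2 / d) + p2 * (- q1 / d) = 1" "p1 * (- p2 / d) + p2 * (p1 / d) = 0"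
      "q1 * (q2 / d) + q2 * (- q1 / d) = 0" "q1 * (- p2 / d) + q2 * (p1 / d) = 1"
    using \<open>d \<noteq> 0\<close> by (simp_all add: field_simps) (simp_all add: d_def algebra_simps)
  show thesis
  proof (rule that[of "lincomb (q2 / d) b1 (- p2 / d) b2" "lincomb (- q1 / d) b1 (p1 / d) b2"])
    show "elementary_operator (lincomb p1 a1 q1 a2) (lincomb (q2 / d) b1 (- p2 / d) b2)
        (lincomb p2 a1 q2 a2) (lincomb (- q1 / d) b1 (p1 / d) b2) \<eta> = elementary_operator a1 b1 a2 b2 \<eta>"
      if "bounded_clinear \<eta>" for \<eta>
      by (rule elementary_operator_change_coeffs[OF ops(1,3) that inverse])
    show "elementary_form (lincomb p1 a1 q1 a2) (lincomb (q2 / d) b1 (- p2 / d) b2)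
        (lincomb p2 a1 q2 a2) (lincomb (- q1 / d) b1 (p1 / d) b2) x y = elementary_form a1 b1 a2 b2 x y"
      for x y
      by (rule elementary_form_change_coeffs[OF inverse])
  qed (use ops in \<open>simp_all add: bounded_clinear_lincomb qform_lincomb d_def diff_divide_distrib\<close>)
qed

lemma normalize_elementary_coeffs:
  fixes a1 b1 a2 b2 :: "'a::complex_inner \<Rightarrow> 'a"
  assumes ops: "bounded_clinear a1" "bounded_clinear b1" "bounded_clinear a2" "bounded_clinear b2"
    and "c > 0"
    and form_real: "\<And>x y. Im (elementary_form a1 b1 a2 b2 x y) = 0"
    and form_lower: "\<And>x y. c * ((norm x)\<^sup>2 * (norm y)\<^sup>2) \<le> Re (elementary_form a1 b1 a2 b2 x y)"
    and "norm y1 = 1"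
  obtains A1 B1 A2 B2 where
    "bounded_clinear A1" "bounded_clinear B1" "bounded_clinear A2" "bounded_clinear B2"
    "\<And>\<eta>. bounded_clinear \<eta> \<Longrightarrow> elementary_operator A1 B1 A2 B2 \<eta> = elementary_operator a1 b1 a2 b2 \<eta>"
    "\<And>x y. elementary_form A1 B1 A2 B2 x y = elementary_form a1 b1 a2 b2 x y"
    "\<And>x. qform A1 x = elementary_form a1 b1 a2 b2 x y1"
    "\<And>x. Im (qform A2 x) = 0"
proof -
  define p1 q1 where "p1 = qform b1 y1" and "q1 = qform b2 y1"
  define A1 where "A1 = lincomb p1 a1 q1 a2"
  have A1: "qform A1 x = elementary_form a1 b1 a2 b2 x y1" for x
    by (simp add: A1_def qform_lincomb elementary_form_def p1_def q1_def mult.commute)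
  have "p1 \<noteq> 0 \<or> q1 \<noteq> 0"
    using form_lower[of y1 y1] \<open>c > 0\<close> \<open>norm y1 = 1\<close> by (auto simp: elementary_form_def p1_def q1_def)
  then obtain p2 q2 where "p1 * q2 - p2 * q1 \<noteq> 0"
    and cases: "(\<exists>y. p2 = qform b1 y \<and> q2 = qform b2 y) \<or> (\<forall>y. p1 * qform b2 y = q1 * qform b1 y)"
    by (rule complementary_coeffs)
  define A2 where "A2 = lincomb p2 a1 q2 a2"
  obtain B1 B2 where bounded: "bounded_clinear B1" "bounded_clinear B2"
    and EO: "\<And>\<eta>. bounded_clinear \<eta> \<Longrightarrow> elementary_operator A1 B1 A2 B2 \<eta> = elementary_operator a1 b1 a2 b2 \<eta>"
    and EF: "\<And>x y. elementary_form A1 B1 A2 B2 x y = elementary_form a1 b1 a2 b2 x y"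
    and B2: "\<And>y. qform B2 y = (p1 * qform b2 y - q1 * qform b1 y) / (p1 * q2 - p2 * q1)"
    unfolding A1_def A2_def
    by (fact elementary_change_coeffs_invertible[OF ops \<open>p1 * q2 - p2 * q1 \<noteq> 0\<close>])
  have "bounded_clinear A1" "bounded_clinear A2"
    using ops by (simp_all add: A1_def A2_def bounded_clinear_lincomb)
  from cases show thesis
  proof
    assume "\<exists>y. p2 = qform b1 y \<and> q2 = qform b2 y"
    then obtain y2 where A2: "qform A2 x = elementary_form a1 b1 a2 b2 x y2" for x
      by (auto simp: A2_def qform_lincomb elementary_form_def mult.commute)
    show thesis
      by (rule that[OF \<open>bounded_clinear A1\<close> bounded(1) \<open>bounded_clinear A2\<close> bounded(2) EO EF A1])
         (simp_all add: A2 form_real)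
  next
    assume "\<forall>y. p1 * qform b2 y = q1 * qform b1 y"
    then have "qform B2 y = 0" for y
      by (simp add: B2)
    moreover from this have "B2 y = 0" for y
      using bounded_clinear_eq_zero_if_qform_zero[OF bounded(2)] by blast
    ultimately show thesis
      using EO EF \<open>bounded_clinear A2\<close>
      by (intro that[OF \<open>bounded_clinear A1\<close> bounded(1) bounded_clinear_const_zero bounded_clinear_const_zero])
         (simp_all add: A1 elementary_operator_def elementary_form_def qform_def[of "\<lambda>x. 0"]
           bounded_clinear_zero_apply)
  qed
qed

section \<open>Orthonormal expansions and the Hilbert--Schmidt pairing\<close>

lemma summable_on_if_small_tails:
  fixes f :: "'i \<Rightarrow> 'a::{real_normed_vector, complete_space}"
  assumes tails: "\<And>\<epsilon>. \<epsilon> > 0 \<Longrightarrow> \<exists>F0. finite F0 \<and> F0 \<subseteq> A \<and>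
                    (\<forall>G. finite G \<longrightarrow> G \<subseteq> A \<longrightarrow> G \<inter> F0 = {} \<longrightarrow> norm (sum f G) < \<epsilon>)"
  shows "f summable_on A"
proof -
  have "\<exists>P. eventually P (finite_subsets_at_top A) \<and>
            (\<forall>F F'. P F \<and> P F' \<longrightarrow> dist (sum f F) (sum f F') < \<epsilon>)" if "\<epsilon> > 0" for \<epsilon>
  proof -
    obtain F0 where F0: "finite F0" "F0 \<subseteq> A"
      "\<And>G. finite G \<Longrightarrow> G \<subseteq> A \<Longrightarrow> G \<inter> F0 = {} \<Longrightarrow> norm (sum f G) < \<epsilon> / 2"
      using tails[of "\<epsilon> / 2"] \<open>\<epsilon> > 0\<close> by auto
    define P where "P F \<longleftrightarrow> finite F \<and> F0 \<subseteq> F \<and> F \<subseteq> A" for F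
    have "eventually P (finite_subsets_at_top A)"
      unfolding eventually_finite_subsets_at_top P_def using F0 by auto
    moreover have "dist (sum f F) (sum f F') < \<epsilon>" if "P F" "P F'" for F F'
    proof -
      have "sum f F = sum f (F - F0) + sum f F0" "sum f F' = sum f (F' - F0) + sum f F0"
        using that by (simp_all add: P_def sum.subset_diff)
      then have "dist (sum f F) (sum f F') \<le> norm (sum f (F - F0)) + norm (sum f (F' - F0))"
        by (simp add: dist_norm norm_triangle_ineq4)
      also have "\<dots> < \<epsilon> / 2 + \<epsilon> / 2"
        using that by (intro add_strict_mono F0(3)) (auto simp: P_def)
      finally show ?thesis by simp
    qed
    ultimately show ?thesis by blast
  qed
  then have "cauchy_filter (filtermap (sum f) (finite_subsets_at_top A))"
    by (simp add: cauchy_filter_metric_filtermap)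
  moreover have "complete (UNIV :: 'a set)"
    by (meson Cauchy_convergent UNIV_I complete_def convergent_def)
  ultimately obtain s where "(sum f \<longlongrightarrow> s) (finite_subsets_at_top A)"
    using complete_uniform[where S = UNIV] by (force simp: filterlim_def)
  then show ?thesis
    unfolding summable_on_def has_sum_def by blast
qed

lemma nonneg_summable_on_small_tails:
  fixes f :: "'i \<Rightarrow> real"
  assumes "f summable_on A" "\<And>x. x \<in> A \<Longrightarrow> 0 \<le> f x" "\<epsilon> > 0"
  obtains F0 where "finite F0" "F0 \<subseteq> A" "\<And>G. finite G \<Longrightarrow> G \<subseteq> A \<Longrightarrow> G \<inter> F0 = {} \<Longrightarrow> sum f G < \<epsilon>"
proof -
  obtain F0 where F0: "finite F0" "F0 \<subseteq> A" "dist (sum f F0) (infsum f A) \<le> \<epsilon> / 2"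
    using infsum_finite_approximation[OF assms(1), of "\<epsilon> / 2"] assms(3) by auto
  have "sum f G < \<epsilon>" if G: "finite G" "G \<subseteq> A" "G \<inter> F0 = {}" for G
  proof -
    have "sum f F0 + sum f G = sum f (F0 \<union> G)"
      using F0 G by (subst sum.union_disjoint) auto
    also have "\<dots> \<le> infsum f A"
      using F0 G assms by (intro finite_sum_le_infsum) auto
    finally show ?thesis
      using F0(3) assms(3) unfolding dist_real_def by arith
  qed
  with F0(1,2) show thesis by (rule that)
qed

context
  fixes B :: "'a::{complex_inner, complete_space} set"
  assumes onb: "orthonormal_basis B"
begin

lemma onb_cinner: "e \<in> B \<Longrightarrow> f \<in> B \<Longrightarrow> cinner e f = (if e = f then 1 else 0)"
  using onb unfolding orthonormal_basis_def by auto

lemma onb_eq_zero: "(\<And>e. e \<in> B \<Longrightarrow> cinner e x = 0) \<Longrightarrow> x = 0"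
  using onb unfolding orthonormal_basis_def by blast

lemma cinner_onb_sum:
  assumes "finite F" "F \<subseteq> B" "e \<in> F"
  shows "cinner e (\<Sum>f\<in>F. c f *\<^sub>C f) = c e"
proof -
  have "cinner e (\<Sum>f\<in>F. c f *\<^sub>C f) = (\<Sum>f\<in>F. if e = f then c f else 0)"
    unfolding cinner_right.sum
    by (rule sum.cong) (use assms in \<open>auto simp: cinner_scaleC_right onb_cinner subset_eq\<close>)
  also have "\<dots> = c e"
    using assms by (simp add: sum.delta)
  finally show ?thesis .
qed

lemma norm_onb_sum:
  assumes "finite F" "F \<subseteq> B"
  shows "(norm (\<Sum>e\<in>F. c e *\<^sub>C e))\<^sup>2 = (\<Sum>e\<in>F. (cmod (c e))\<^sup>2)"
proof -
  have "complex_of_real ((norm (\<Sum>e\<in>F. c e *\<^sub>C e))\<^sup>2) = (\<Sum>e\<in>F. cnj (c e) * c e)"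
    using assms by (subst cinner_self[symmetric])
      (auto simp: cinner_left.sum cinner_scaleC_left cinner_onb_sum intro!: sum.cong)
  also have "\<dots> = complex_of_real (\<Sum>e\<in>F. (cmod (c e))\<^sup>2)"
    by (simp add: cnj_mult_self)
  finally show ?thesis
    by (simp only: of_real_eq_iff)
qed

lemma bessel_inequality:
  assumes "finite F" "F \<subseteq> B"
  shows "(\<Sum>e\<in>F. (cmod (cinner e y))\<^sup>2) \<le> (norm y)\<^sup>2"
proof -
  define s where "s = (\<Sum>e\<in>F. cinner e y *\<^sub>C e)"
  define \<sigma> where "\<sigma> = (\<Sum>e\<in>F. (cmod (cinner e y))\<^sup>2)"
  have "cinner s y = of_real \<sigma>"
    unfolding s_def \<sigma>_def
    by (simp add: cinner_left.sum cinner_scaleC_left cnj_mult_self)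
  moreover have "cinner s s = of_real \<sigma>"
    unfolding s_def \<sigma>_def by (simp add: cinner_self norm_onb_sum[OF assms])
  ultimately have "cinner (y - s) (y - s) = of_real ((norm y)\<^sup>2 - \<sigma>)"
    by (simp add: cinner_left.diff cinner_right.diff cinner_self[of y] cinner_commute[of y s])
  then show ?thesis
    using cinner_ge_zero[of "y - s"] by (simp add: \<sigma>_def)
qed

lemma summable_on_onb_coeffs_square: "(\<lambda>e. (cmod (cinner e y))\<^sup>2) summable_on B"
  using bessel_inequality by (auto intro!: nonneg_bdd_above_summable_on bdd_aboveI)

lemma summable_on_onb_expansion: "(\<lambda>e. cinner e y *\<^sub>C e) summable_on B"
proof (rule summable_on_if_small_tails)
  fix \<epsilon> :: real
  assume "\<epsilon> > 0"
  then have sq_pos: "\<epsilon>\<^sup>2 > 0" by simp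
  obtain F0 where F0: "finite F0" "F0 \<subseteq> B"
    "\<And>G. finite G \<Longrightarrow> G \<subseteq> B \<Longrightarrow> G \<inter> F0 = {} \<Longrightarrow> (\<Sum>e\<in>G. (cmod (cinner e y))\<^sup>2) < \<epsilon>\<^sup>2"
    by (fact nonneg_summable_on_small_tails[OF summable_on_onb_coeffs_square[of y] zero_le_power2 sq_pos])
  have "norm (\<Sum>e\<in>G. cinner e y *\<^sub>C e) < \<epsilon>" if "finite G" "G \<subseteq> B" "G \<inter> F0 = {}" for G
  proof -
    have "(norm (\<Sum>e\<in>G. cinner e y *\<^sub>C e))\<^sup>2 < \<epsilon>\<^sup>2"
      using norm_onb_sum[OF that(1,2)] F0(3)[OF that] by simp
    then show ?thesis
      using \<open>\<epsilon> > 0\<close> by (auto intro: power2_less_imp_less)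
  qed
  with F0(1,2) show "\<exists>F0. finite F0 \<and> F0 \<subseteq> B \<and> (\<forall>G. finite G \<longrightarrow> G \<subseteq> B \<longrightarrow> G \<inter> F0 = {} \<longrightarrow>
      norm (\<Sum>e\<in>G. cinner e y *\<^sub>C e) < \<epsilon>)" by blast
qed

lemma has_sum_onb_expansion: "((\<lambda>e. cinner e y *\<^sub>C e) has_sum y) B"
proof -
  define z where "z = (\<Sum>\<^sub>\<infinity>e\<in>B. cinner e y *\<^sub>C e)"
  have z: "((\<lambda>e. cinner e y *\<^sub>C e) has_sum z) B"
    using summable_on_onb_expansion by (simp add: z_def summable_iff_has_sum_infsum)
  have "cinner e0 z = cinner e0 y" if "e0 \<in> B" for e0
  proof (rule has_sum_unique)
    show "((\<lambda>e. cinner e0 (cinner e y *\<^sub>C e)) has_sum cinner e0 z) B"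
      using has_sum_bounded_linear[OF bounded_linear_cinner_compose[OF bounded_clinear_id] z] by simp
    show "((\<lambda>e. cinner e0 (cinner e y *\<^sub>C e)) has_sum cinner e0 y) B"
      by (rule has_sum_finite_neutralI[of "{e0}"])
         (use \<open>e0 \<in> B\<close> in \<open>auto simp: cinner_scaleC_right onb_cinner\<close>)
  qed
  then have "y - z = 0"
    by (intro onb_eq_zero) (simp add: cinner_right.diff)
  with z show ?thesis by simp
qed

lemma parseval_bounded_clinear:
  assumes "bounded_clinear T"
  shows "((\<lambda>e. cinner e y * cinner w (T e)) has_sum cinner w (T y)) B"
  using has_sum_bounded_linear[OF bounded_linear_cinner_compose[OF assms, of w] has_sum_onb_expansion[of y]]
  by (simp add: bounded_clinear_scaleC[OF assms] cinner_scaleC_right)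


lemma hilbert_schmidt_rank_one: "hilbert_schmidt B (rank_one x y)"
proof -
  have "(norm (rank_one x y e))\<^sup>2 = (norm x)\<^sup>2 * (cmod (cinner e y))\<^sup>2" for e
    by (simp add: rank_one_def norm_scaleC power_mult_distrib cinner_commute[of y e])
  then show ?thesis
    unfolding hilbert_schmidt_def
    using bounded_clinear_rank_one summable_on_cmult_right[OF summable_on_onb_coeffs_square]
    by simp
qed

lemma hs_inner_rank_one_left:
  assumes "bounded_clinear \<tau>"
  shows "hs_inner B (rank_one x y) \<tau> = cinner x (\<tau> y)"
  unfolding hs_inner_def rank_one_def
  using parseval_bounded_clinear[OF assms, of y x]
  by (simp add: cinner_scaleC_left cinner_commute[of y] infsumI)

lemma hs_inner_rank_one_elementary_operator:
  assumes "bounded_clinear a1" "bounded_clinear b1" "bounded_clinear a2" "bounded_clinear b2"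
  shows "hs_inner B (rank_one x y) (elementary_operator a1 b1 a2 b2 (rank_one x y)) =
         elementary_form a1 b1 a2 b2 x y"
  using assms
  by (simp add: hs_inner_rank_one_left bounded_clinear_elementary_operator bounded_clinear_rank_one)
     (simp add: elementary_operator_def elementary_form_def rank_one_def qform_def
        bounded_clinear_scaleC cinner_add_right cinner_scaleC_right)

lemma elementary_form_lower_bound:
  assumes "bounded_clinear a1" "bounded_clinear b1" "bounded_clinear a2" "bounded_clinear b2"
    and "posdef_wrt (hs_inner B) {\<eta>. hilbert_schmidt B \<eta>} (elementary_operator a1 b1 a2 b2)"
  obtains c where "c > 0"
    "\<And>x y. Im (elementary_form a1 b1 a2 b2 x y) = 0"
    "\<And>x y. c * ((norm x)\<^sup>2 * (norm y)\<^sup>2) \<le> Re (elementary_form a1 b1 a2 b2 x y)"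
proof -
  obtain c where "c > 0" and c: "\<And>\<eta>. hilbert_schmidt B \<eta> \<Longrightarrow>
      Im (hs_inner B \<eta> (elementary_operator a1 b1 a2 b2 \<eta>)) = 0 \<and>
      c * Re (hs_inner B \<eta> \<eta>) \<le> Re (hs_inner B \<eta> (elementary_operator a1 b1 a2 b2 \<eta>))"
    using assms(5) unfolding posdef_wrt_def by blast
  have "hs_inner B (rank_one x y) (rank_one x y) = of_real ((norm x)\<^sup>2 * (norm y)\<^sup>2)" for x y
    by (simp add: hs_inner_rank_one_left bounded_clinear_rank_one)
       (simp add: rank_one_def cinner_scaleC_right cinner_self mult.commute)
  then have bounds: "Im (elementary_form a1 b1 a2 b2 x y) = 0 \<and>
      c * ((norm x)\<^sup>2 * (norm y)\<^sup>2) \<le> Re (elementary_form a1 b1 a2 b2 x y)" for x y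
    using c[OF hilbert_schmidt_rank_one, of x y]
    by (simp only: hs_inner_rank_one_elementary_operator[OF assms(1-4)] Re_complex_of_real)
  show thesis
    by (rule that[OF \<open>c > 0\<close>]) (simp_all add: bounds)
qed

end

section \<open>Representations with positive coefficients\<close>

lemma posdef_id: "posdef_wrt cinner UNIV (\<lambda>x::'a::complex_inner. x)"
  unfolding posdef_wrt_cinner_iff by (auto simp: qform_def cinner_self intro!: exI[of _ 1])

definition positive_coeffs :: "('a::complex_inner \<Rightarrow> 'a) \<Rightarrow> ('a \<Rightarrow> 'a) \<Rightarrow> ('a \<Rightarrow> 'a) \<Rightarrow> ('a \<Rightarrow> 'a) \<Rightarrow> bool"
  where "positive_coeffs a1 b1 a2 b2 \<longleftrightarrow>
    bounded_clinear a1 \<and> bounded_clinear a2 \<and> bounded_clinear b1 \<and> bounded_clinear b2 \<and>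
    nonneg_wrt cinner UNIV a1 \<and> nonneg_wrt cinner UNIV a2 \<and> {x. a1 x = 0} \<inter> {x. a2 x = 0} = {0} \<and>
    posdef_wrt cinner UNIV b1 \<and> posdef_wrt cinner UNIV b2"

definition positive_representable ::
    "('a::complex_inner \<Rightarrow> 'a) \<Rightarrow> ('a \<Rightarrow> 'a) \<Rightarrow> ('a \<Rightarrow> 'a) \<Rightarrow> ('a \<Rightarrow> 'a) \<Rightarrow> bool"
  where "positive_representable a1 b1 a2 b2 \<longleftrightarrow>
    (\<exists>a1' b1' a2' b2'. positive_coeffs a1' b1' a2' b2' \<and>
       (\<forall>\<eta>. bounded_clinear \<eta> \<longrightarrow>
          elementary_operator a1 b1 a2 b2 \<eta> = elementary_operator a1' b1' a2' b2' \<eta>))"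

lemma positive_representable_cong:
  assumes "\<And>\<eta>. bounded_clinear \<eta> \<Longrightarrow>
      elementary_operator a1 b1 a2 b2 \<eta> = elementary_operator a1' b1' a2' b2' \<eta>"
    and "positive_representable a1' b1' a2' b2'"
  shows "positive_representable a1 b1 a2 b2"
  using assms unfolding positive_representable_def by metis

lemma positive_representable_single_term:
  fixes a b :: "'a::complex_inner \<Rightarrow> 'a"
  assumes "bounded_clinear a" "bounded_clinear b"
    and "posdef_wrt cinner UNIV a" "posdef_wrt cinner UNIV b"
    and "\<And>\<eta>. bounded_clinear \<eta> \<Longrightarrow> elementary_operator a1 b1 a2 b2 \<eta> = (\<lambda>x. a (\<eta> (b x)))"
  shows "positive_representable a1 b1 a2 b2"
proof -
  have "{x. a x = 0} \<inter> {x. (\<lambda>x. 0::'a) x = 0} = {0}"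
    using kernels_trivial_if_sum_posdef[OF assms(1) bounded_clinear_const_zero] assms(3) by simp
  moreover have "nonneg_wrt cinner UNIV (\<lambda>x. 0::'a)"
    by (simp add: nonneg_wrt_cinner_iff qform_def)
  ultimately have "positive_coeffs a b (\<lambda>x. 0) (\<lambda>x. x)"
    using assms(1-4) posdef_id nonneg_if_posdef[OF assms(3)] bounded_clinear_id bounded_clinear_const_zero
    unfolding positive_coeffs_def by blast
  with assms(5) show ?thesis
    unfolding positive_representable_def
    by (intro exI[of _ a] exI[of _ b] exI[of _ "\<lambda>x. 0"] exI[of _ "\<lambda>x. x"])
       (simp add: elementary_operator_def)
qed

lemma positive_representable_rebalance:
  fixes A1 B1 A2 B2 :: "'a::complex_inner \<Rightarrow> 'a" and smin smax :: real
  assumes ops: "bounded_clinear A1" "bounded_clinear B1" "bounded_clinear A2" "bounded_clinear B2"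
    and A1: "posdef_wrt cinner UNIV A1" and A2_real: "\<And>x. Im (qform A2 x) = 0"
    and "smin < smax"
    and between: "\<And>x. smin * Re (qform A1 x) \<le> Re (qform A2 x)"
      "\<And>x. Re (qform A2 x) \<le> smax * Re (qform A1 x)"
    and B: "posdef_wrt cinner UNIV (lincomb 1 B1 smin B2)" "posdef_wrt cinner UNIV (lincomb 1 B1 smax B2)"
  shows "positive_representable A1 B1 A2 B2"
proof -
  define \<Delta> where "\<Delta> = smax - smin"
  have "\<Delta> > 0" "complex_of_real \<Delta> \<noteq> 0"
    using \<open>smin < smax\<close> by (simp_all add: \<Delta>_def)
  define C1 where "C1 = lincomb (smax / \<Delta>) A1 (- 1 / \<Delta>) A2"
  define C2 where "C2 = lincomb (- smin / \<Delta>) A1 (1 / \<Delta>) A2"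
  have A1_real: "Im (qform A1 x) = 0" for x
    using A1 by (auto simp: posdef_wrt_cinner_iff)
  have "nonneg_wrt cinner UNIV C1" "nonneg_wrt cinner UNIV C2"
    using A1_real A2_real between \<open>\<Delta> > 0\<close>
    by (auto simp: nonneg_wrt_cinner_iff C1_def C2_def qform_lincomb field_simps)
  moreover have "C1 x + C2 x = A1 x" for x
  proof -
    have "smax / \<Delta> + - smin / \<Delta> = 1" "- 1 / \<Delta> + 1 / \<Delta> = 0"
      using \<open>\<Delta> > 0\<close> by (simp_all add: \<Delta>_def[symmetric] field_simps)
    then have "complex_of_real (smax / \<Delta>) + complex_of_real (- smin / \<Delta>) = 1"
        "complex_of_real (- 1 / \<Delta>) + complex_of_real (1 / \<Delta>) = 0"
      by (metis of_real_add of_real_1, metis of_real_add of_real_0)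
    moreover have "C1 x + C2 x =
        (complex_of_real (smax / \<Delta>) + complex_of_real (- smin / \<Delta>)) *\<^sub>C A1 x +
        (complex_of_real (- 1 / \<Delta>) + complex_of_real (1 / \<Delta>)) *\<^sub>C A2 x"
      by (simp only: C1_def C2_def lincomb_def cvec.scale_left_distrib add_ac)
    ultimately show ?thesis by simp
  qed
  then have "{x. C1 x = 0} \<inter> {x. C2 x = 0} = {0}"
    using kernels_trivial_if_sum_posdef[of C1 C2] A1 ops
    by (simp add: C1_def C2_def bounded_clinear_lincomb)
  moreover have "elementary_operator C1 (lincomb 1 B1 smin B2) C2 (lincomb 1 B1 smax B2) \<eta> =
      elementary_operator A1 B1 A2 B2 \<eta>" if "bounded_clinear \<eta>" for \<eta>
    unfolding C1_def C2_def
    by (rule elementary_operator_change_coeffs[OF ops(1,3) that])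
       (use \<open>complex_of_real \<Delta> \<noteq> 0\<close> in
         \<open>simp_all add: field_simps \<Delta>_def[symmetric] flip: of_real_diff\<close>)
  ultimately show ?thesis
    using ops B unfolding positive_representable_def positive_coeffs_def
    by (intro exI[of _ C1] exI[of _ "lincomb 1 B1 smin B2"] exI[of _ C2] exI[of _ "lincomb 1 B1 smax B2"])
       (auto simp: C1_def C2_def bounded_clinear_lincomb)
qed

lemma lower_bound_on_closure:
  fixes f :: "'a::topological_space \<Rightarrow> real"
  assumes "continuous_on UNIV f" "\<And>s. s \<in> S \<Longrightarrow> m \<le> f s" "t \<in> closure S"
  shows "m \<le> f t"
proof -
  have "closed {s. m \<le> f s}"
    using assms(1) by (intro closed_Collect_le continuous_on_const)
  then have "closure S \<subseteq> {s. m \<le> f s}"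
    using assms(2) by (intro closure_minimal) auto
  with assms(3) show ?thesis by auto
qed

locale normalized_elementary =
  fixes A1 B1 A2 B2 :: "'a::complex_inner \<Rightarrow> 'a" and c :: real
  assumes bounded: "bounded_clinear A1" "bounded_clinear B1" "bounded_clinear A2" "bounded_clinear B2"
    and c_pos: "c > 0"
    and form_real: "\<And>x y. Im (elementary_form A1 B1 A2 B2 x y) = 0"
    and form_lower: "\<And>x y. c * ((norm x)\<^sup>2 * (norm y)\<^sup>2) \<le> Re (elementary_form A1 B1 A2 B2 x y)"
    and A1_real: "\<And>x. Im (qform A1 x) = 0"
    and A1_lower: "\<And>x. c * (norm x)\<^sup>2 \<le> Re (qform A1 x)"
    and A2_real: "\<And>x. Im (qform A2 x) = 0"
begin

text \<open>The function t of the proof idea; ratio 0 = 0, and both forms vanish at 0.\<close>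
definition ratio :: "'a \<Rightarrow> real" where
  "ratio x = Re (qform A2 x) / Re (qform A1 x)"

lemma A1_pos: "x \<noteq> 0 \<Longrightarrow> 0 < Re (qform A1 x)"
  using A1_lower[of x] c_pos by (smt (verit) mult_pos_pos zero_less_norm_iff zero_less_power)

lemma A1_posdef: "posdef_wrt cinner UNIV A1"
  unfolding posdef_wrt_cinner_iff using c_pos A1_real A1_lower by blast

lemma qform_A2_eq: "qform A2 x = ratio x * qform A1 x"
proof (cases "x = 0")
  case True
  then show ?thesis by (simp add: qform_def)
next
  case False
  then show ?thesis
    using A1_pos[of x] A1_real[of x] A2_real[of x] by (simp add: ratio_def complex_eq_iff)
qed

lemma ratio_bounded: obtains M where "\<And>x. \<bar>ratio x\<bar> \<le> M"
proof -
  obtain K where K: "K > 0" "\<And>x. cmod (qform A2 x) \<le> K * (norm x)\<^sup>2"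
    using qform_bound[OF bounded(3)] by blast
  have "\<bar>ratio x\<bar> \<le> K / c" for x
  proof (cases "x = 0")
    case False
    have "\<bar>ratio x\<bar> = \<bar>Re (qform A2 x)\<bar> / Re (qform A1 x)"
      using A1_pos[OF False] by (simp add: ratio_def)
    also have "\<dots> \<le> K * (norm x)\<^sup>2 / (c * (norm x)\<^sup>2)"
    proof (rule frac_le)
      show "\<bar>Re (qform A2 x)\<bar> \<le> K * (norm x)\<^sup>2"
        using K(2)[of x] abs_Re_le_cmod[of "qform A2 x"] by linarith
      show "0 < c * (norm x)\<^sup>2"
        using c_pos False by simp
    qed (use A1_lower K(1) in simp_all)
    also have "\<dots> = K / c"
      using False by (intro mult_divide_mult_cancel_right) simp
    finally show ?thesis .
  qed (use K(1) c_pos in \<open>simp add: ratio_def qform_def\<close>)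
  then show thesis by (rule that)
qed

lemma B_lincomb_lower_bound:
  obtains c' where "c' > 0" "\<And>x y. x \<noteq> 0 \<Longrightarrow> Im (qform (lincomb 1 B1 (ratio x) B2) y) = 0"
    "\<And>x y. x \<noteq> 0 \<Longrightarrow> c' * (norm y)\<^sup>2 \<le> Re (qform (lincomb 1 B1 (ratio x) B2) y)"
proof -
  obtain K where K: "K > 0" "\<And>x. cmod (qform A1 x) \<le> K * (norm x)\<^sup>2"
    using qform_bound[OF bounded(1)] by blast
  have *: "Im (qform (lincomb 1 B1 (ratio x) B2) y) = 0 \<and>
      c / K * (norm y)\<^sup>2 \<le> Re (qform (lincomb 1 B1 (ratio x) B2) y)" if "x \<noteq> 0" for x y
  proof -
    define P where "P = Re (qform A1 x)"
    define q where "q = qform (lincomb 1 B1 (ratio x) B2) y"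
    have "P > 0" "P \<le> K * (norm x)\<^sup>2"
      using A1_pos[OF that] K(2)[of x] abs_Re_le_cmod[of "qform A1 x"] by (auto simp: P_def)
    have "elementary_form A1 B1 A2 B2 x y = of_real P * q"
      using A1_real[of x] by (simp add: elementary_form_def qform_A2_eq q_def P_def qform_lincomb
          complex_eq_iff algebra_simps)
    then have "Im q = 0" "c * ((norm x)\<^sup>2 * (norm y)\<^sup>2) \<le> P * Re q"
      using form_real[of x y] form_lower[of x y] \<open>P > 0\<close> by auto
    moreover have "c / K * (norm y)\<^sup>2 * P \<le> c / K * (norm y)\<^sup>2 * (K * (norm x)\<^sup>2)"
      using \<open>P \<le> K * (norm x)\<^sup>2\<close> K(1) c_pos by (intro mult_left_mono) auto
    moreover have "c / K * (norm y)\<^sup>2 * (K * (norm x)\<^sup>2) = c * ((norm x)\<^sup>2 * (norm y)\<^sup>2)"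
      using K(1) by (simp add: field_simps)
    ultimately have "c / K * (norm y)\<^sup>2 * P \<le> Re q * P"
      by (simp add: mult.commute)
    then have "c / K * (norm y)\<^sup>2 \<le> Re q"
      using \<open>P > 0\<close> by (rule mult_right_le_imp_le)
    with \<open>Im q = 0\<close> show ?thesis
      by (simp add: q_def)
  qed
  have "c / K > 0"
    using c_pos K(1) by simp
  then show thesis
    by (rule that) (use * in blast)+
qed

lemma positive_representable_if_ratio_constant:
  assumes "x0 \<noteq> 0" and ratio_const: "\<And>x. x \<noteq> 0 \<Longrightarrow> ratio x = ratio x0"
  shows "positive_representable A1 B1 A2 B2"
proof -
  define s where "s = ratio x0"
  have "qform (lincomb 1 A2 (- s) A1) x = 0" for x
    using ratio_const[of x] by (cases "x = 0") (simp add: qform_def, simp add: qform_lincomb qform_A2_eq s_def)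
  then have "lincomb 1 A2 (- s) A1 x = 0" for x
    using bounded_clinear_eq_zero_if_qform_zero[OF bounded_clinear_lincomb[OF bounded(3,1)]] by blast
  then have A2: "A2 x = s *\<^sub>C A1 x" for x
    by (simp add: lincomb_def eq_neg_iff_add_eq_0)
  obtain c' where "c' > 0" "\<And>y. Im (qform (lincomb 1 B1 s B2) y) = 0"
    "\<And>y. c' * (norm y)\<^sup>2 \<le> Re (qform (lincomb 1 B1 s B2) y)"
    using B_lincomb_lower_bound \<open>x0 \<noteq> 0\<close> unfolding s_def by metis
  then have "posdef_wrt cinner UNIV (lincomb 1 B1 s B2)"
    unfolding posdef_wrt_cinner_iff by blast
  then show ?thesis
  proof (rule positive_representable_single_term[OF bounded(1) bounded_clinear_lincomb[OF bounded(2,4)] A1_posdef])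
    show "elementary_operator A1 B1 A2 B2 \<eta> = (\<lambda>x. A1 (\<eta> (lincomb 1 B1 s B2 x)))"
      if "bounded_clinear \<eta>" for \<eta>
      using that bounded(1)
      by (simp add: elementary_operator_def lincomb_def A2 bounded_clinear_add_apply bounded_clinear_scaleC)
  qed
qed

definition ratios :: "real set" where
  "ratios = ratio ` {x. x \<noteq> 0}"

lemma bdd_ratios: "bdd_below ratios" "bdd_above ratios"
proof -
  obtain M where M: "\<And>x. \<bar>ratio x\<bar> \<le> M"
    using ratio_bounded by blast
  have "- M \<le> ratio x" "ratio x \<le> M" for x
    using M[of x] by auto
  then show "bdd_below ratios" "bdd_above ratios"
    unfolding ratios_def by (metis bdd_belowI2, metis bdd_aboveI2)
qed

lemma A2_between_ratio_bounds:
  "Inf ratios * Re (qform A1 x) \<le> Re (qform A2 x)" "Re (qform A2 x) \<le> Sup ratios * Re (qform A1 x)"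
proof -
  have "Inf ratios * Re (qform A1 x) \<le> Re (qform A2 x) \<and> Re (qform A2 x) \<le> Sup ratios * Re (qform A1 x)"
  proof (cases "x = 0")
    case False
    then have "Inf ratios \<le> ratio x" "ratio x \<le> Sup ratios"
      using bdd_ratios by (auto simp: ratios_def intro: cInf_lower cSup_upper)
    then show ?thesis
      using A1_pos[OF False] by (simp add: qform_A2_eq mult_right_mono)
  qed (simp add: qform_def)
  then show "Inf ratios * Re (qform A1 x) \<le> Re (qform A2 x)" "Re (qform A2 x) \<le> Sup ratios * Re (qform A1 x)"
    by simp_all
qed

lemma posdef_lincomb_closure_ratios:
  assumes "x1 \<noteq> 0" "x2 \<noteq> 0" "ratio x1 \<noteq> ratio x2" and "s \<in> closure ratios"
  shows "posdef_wrt cinner UNIV (lincomb 1 B1 s B2)"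
proof -
  obtain c' where "c' > 0" and B_real: "\<And>x y. x \<noteq> 0 \<Longrightarrow> Im (qform (lincomb 1 B1 (ratio x) B2) y) = 0"
    and B_lower: "\<And>x y. x \<noteq> 0 \<Longrightarrow> c' * (norm y)\<^sup>2 \<le> Re (qform (lincomb 1 B1 (ratio x) B2) y)"
    using B_lincomb_lower_bound by metis
  have "Im (qform B1 y) + ratio x * Im (qform B2 y) = 0" if "x \<noteq> 0" for x y
    using B_real[OF that, of y] by (simp add: qform_lincomb)
  from this[OF assms(1)] this[OF assms(2)] assms(3)
  have "Im (qform B2 y) = 0" "Im (qform B1 y) = 0" for y
    by (metis add_left_cancel mult_cancel_right add.right_neutral mult_zero_left)+
  moreover have "c' * (norm y)\<^sup>2 \<le> Re (qform B1 y) + s * Re (qform B2 y)" for y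
    by (rule lower_bound_on_closure[where f = "\<lambda>s. Re (qform B1 y) + s * Re (qform B2 y)", OF _ _ assms(4)])
       (use B_lower in \<open>auto simp: ratios_def qform_lincomb intro!: continuous_intros\<close>)
  ultimately show ?thesis
    using \<open>c' > 0\<close> unfolding posdef_wrt_cinner_iff by (auto simp: qform_lincomb)
qed

lemma positive_representable_if_ratio_nonconstant:
  assumes "x1 \<noteq> 0" "x2 \<noteq> 0" "ratio x1 \<noteq> ratio x2"
  shows "positive_representable A1 B1 A2 B2"
proof -
  have "ratios \<noteq> {}"
    using assms(1) by (auto simp: ratios_def)
  have "Inf ratios \<le> ratio x" "ratio x \<le> Sup ratios" if "x \<in> {x1, x2}" for x
    using that assms bdd_ratios by (auto simp: ratios_def intro: cInf_lower cSup_upper)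
  with assms(3) have "Inf ratios < Sup ratios"
    by (metis insertI1 insertI2 singletonI order.trans order.not_eq_order_implies_strict antisym)
  then show ?thesis
    using posdef_lincomb_closure_ratios[OF assms] \<open>ratios \<noteq> {}\<close> bdd_ratios
    by (intro positive_representable_rebalance[OF bounded A1_posdef A2_real _ A2_between_ratio_bounds])
       (simp_all add: closure_contains_Inf closure_contains_Sup)
qed

theorem positive_representable:
  fixes x0 :: 'a
  assumes "x0 \<noteq> 0"
  shows "positive_representable A1 B1 A2 B2"
proof (cases "\<forall>x. x \<noteq> 0 \<longrightarrow> ratio x = ratio x0")
  case True
  then show ?thesis
    by (simp add: positive_representable_if_ratio_constant[OF assms])
next
  case False
  then obtain x where "x \<noteq> 0" "ratio x0 \<noteq> ratio x" by auto
  then show ?thesis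
    by (rule positive_representable_if_ratio_nonconstant[OF assms])
qed

end

theorem positive_representable_if_elementary_form_posdef:
  fixes a1 b1 a2 b2 :: "'a::complex_inner \<Rightarrow> 'a"
  assumes ops: "bounded_clinear a1" "bounded_clinear b1" "bounded_clinear a2" "bounded_clinear b2"
    and "c > 0"
    and form_real: "\<And>x y. Im (elementary_form a1 b1 a2 b2 x y) = 0"
    and form_lower: "\<And>x y. c * ((norm x)\<^sup>2 * (norm y)\<^sup>2) \<le> Re (elementary_form a1 b1 a2 b2 x y)"
  shows "positive_representable a1 b1 a2 b2"
proof (cases "\<exists>x0::'a. x0 \<noteq> 0")
  case True
  then obtain x0 :: 'a where "x0 \<noteq> 0" by blast
  define y1 where "y1 = (1 / norm x0) *\<^sub>C x0"
  have "norm y1 = 1"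
    using \<open>x0 \<noteq> 0\<close> by (simp add: y1_def norm_scaleC norm_divide)
  obtain A1 B1 A2 B2 where bounded:
      "bounded_clinear A1" "bounded_clinear B1" "bounded_clinear A2" "bounded_clinear B2"
    and EO: "\<And>\<eta>. bounded_clinear \<eta> \<Longrightarrow>
      elementary_operator A1 B1 A2 B2 \<eta> = elementary_operator a1 b1 a2 b2 \<eta>"
    and EF: "\<And>x y. elementary_form A1 B1 A2 B2 x y = elementary_form a1 b1 a2 b2 x y"
    and A1: "\<And>x. qform A1 x = elementary_form a1 b1 a2 b2 x y1"
    and A2: "\<And>x. Im (qform A2 x) = 0"
    by (fact normalize_elementary_coeffs[OF ops \<open>c > 0\<close> form_real form_lower \<open>norm y1 = 1\<close>])
  interpret normalized_elementary A1 B1 A2 B2 c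
    using bounded \<open>c > 0\<close> form_real form_lower A2 form_lower[of _ y1] \<open>norm y1 = 1\<close>
    by unfold_locales (simp_all add: EF A1)
  show ?thesis
    by (rule positive_representable_cong[OF EO[symmetric] positive_representable[OF \<open>x0 \<noteq> 0\<close>]])
next
  case False
  then have trivial: "x = 0" for x :: 'a by blast
  show ?thesis
    by (rule positive_representable_single_term[OF bounded_clinear_id bounded_clinear_id posdef_id posdef_id])
       (metis trivial)
qed

theorem theorem3p12:
  fixes B :: "'a::{complex_inner, complete_space} set"
    and a1 a2 b1 b2 :: "'a \<Rightarrow> 'a"
    and A :: "('a \<Rightarrow> 'a) \<Rightarrow> ('a \<Rightarrow> 'a)"
  assumes separable: "countable B" "orthonormal_basis B"
    and ops: "bounded_clinear a1" "bounded_clinear a2" "bounded_clinear b1" "bounded_clinear b2"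
    and A_def: "\<And>\<eta>. A \<eta> = (\<lambda>x. a1 (\<eta> (b1 x)) + a2 (\<eta> (b2 x)))"
    and A_posdef: "posdef_wrt (hs_inner B) {\<eta>. hilbert_schmidt B \<eta>} A"
  shows "\<exists>ha1 ha2 hb1 hb2 :: 'a \<Rightarrow> 'a.
           bounded_clinear ha1 \<and> bounded_clinear ha2 \<and> bounded_clinear hb1 \<and> bounded_clinear hb2 \<and>
           nonneg_wrt cinner UNIV ha1 \<and> nonneg_wrt cinner UNIV ha2 \<and>
           {x. ha1 x = 0} \<inter> {x. ha2 x = 0} = {0} \<and>
           posdef_wrt cinner UNIV hb1 \<and> posdef_wrt cinner UNIV hb2 \<and>
           (\<forall>\<eta>. hilbert_schmidt B \<eta> \<longrightarrow> A \<eta> = (\<lambda>x. ha1 (\<eta> (hb1 x)) + ha2 (\<eta> (hb2 x))))"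
proof -
  have A_eq: "A = elementary_operator a1 b1 a2 b2"
    using A_def by (simp add: fun_eq_iff elementary_operator_def)
  obtain c where "c > 0"
    and "\<And>x y. Im (elementary_form a1 b1 a2 b2 x y) = 0"
    and "\<And>x y. c * ((norm x)\<^sup>2 * (norm y)\<^sup>2) \<le> Re (elementary_form a1 b1 a2 b2 x y)"
    by (fact elementary_form_lower_bound[OF separable(2) ops(1,3,2,4) A_posdef[unfolded A_eq]])
  then have "positive_representable a1 b1 a2 b2"
    by (rule positive_representable_if_elementary_form_posdef[OF ops(1,3,2,4)])
  then obtain ha1 hb1 ha2 hb2 where "positive_coeffs ha1 hb1 ha2 hb2"
    and rep: "\<And>\<eta>. bounded_clinear \<eta> \<Longrightarrow>
      elementary_operator a1 b1 a2 b2 \<eta> = elementary_operator ha1 hb1 ha2 hb2 \<eta>"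
    unfolding positive_representable_def by blast
  then show ?thesis
    unfolding positive_coeffs_def A_eq hilbert_schmidt_def
    by (intro exI[of _ ha1] exI[of _ ha2] exI[of _ hb1] exI[of _ hb2])
       (simp add: rep, simp add: elementary_operator_def)
qed

end
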